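(* Let $n$ be a positive integer and let $\mathcal{D}$ be a set of positive divisors of $n/\mathrm{rad}(n)$ which is product-free as a set of integers (i.e. there are no $d_1,d_2,d_3\in\mathcal{D}$ with $d_1d_2=d_3$). Then the set $$ S_{\mathcal{D}} := \{ s\in \mathbb{Z}/n\mathbb{Z} : \gcd(s,n)\in \mathcal{D}\} $$ is a product-free subset of $\mathbb{Z}/n\mathbb{Z}$, and $$ |S_{\mathcal{D}}| = \varphi(n)\sum_{d\in\mathcal{D}}\frac1d . $$
   Context: $\mathrm{rad}(n)$ denotes the largest squarefree divisor of $n$ (the product of the distinct primes dividing $n$), and $\varphi$ is Euler's totient function. For $s\in\mathbb{Z}/n\mathbb{Z}$, $\gcd(s,n)$ means the gcd of $n$ with any integer representative of $s$ (well defined). A subset $S\subseteq \mathbb{Z}/n\mathbb{Z}$ is product-free if there are no $a,b,c\in S$ (not necessarily distinct) with $ab\equiv c\pmod n$. *)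

theory Defs
  imports "HOL-Number_Theory.Number_Theory"
begin

definition rad :: "nat \<Rightarrow> nat" where
  "rad n = (\<Prod>p\<in>prime_factors n. p)"

definition int_product_free :: "nat set \<Rightarrow> bool" where
  "int_product_free D \<longleftrightarrow> \<not> (\<exists>d1\<in>D. \<exists>d2\<in>D. \<exists>d3\<in>D. d1 * d2 = d3)"

text \<open>Z/nZ is represented by the residues {0..<n}; product-free subset.\<close>
definition mod_product_free :: "nat \<Rightarrow> nat set \<Rightarrow> bool" where
  "mod_product_free n S \<longleftrightarrow>
     S \<subseteq> {0..<n} \<and> \<not> (\<exists>a\<in>S. \<exists>b\<in>S. \<exists>c\<in>S. (a * b) mod n = c)"

definition S_D :: "nat \<Rightarrow> nat set \<Rightarrow> nat set" where
  "S_D n D = {s \<in> {0..<n}. gcd s n \<in> D}"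

end

theory Submission
  imports Defs
begin

(*
  Call a divisor d of n "deep" if d * rad n divides n, i.e. d divides n / rad n.
  If gcd m n = d is deep, then m = d * k with k coprime to n: a prime p dividing k and n
  would divide rad n, so d * p would divide both m and n, exceeding the gcd.  Consequently,
  for residues a, b whose gcds d1, d2 with n are deep, gcd (a * b) n = gcd (d1 * d2) n, and if
  this gcd d3 is deep as well then d1 * d2 = d3 (the cofactor of d3 in d1 * d2 is coprime to n
  yet divides n^2).  Hence a * b = c (mod n) inside S_D would give d1 * d2 = d3 in D.

  For the count, S_D is the disjoint union over d in D of the residues with gcd exactly d
  (note n is not in D), and there are totient (n / d) of these.  Since rad n divides n / d,
  the numbers n / d and n have the same prime factors, so totient (n / d) = totient n / d by
  the product formula for the totient.
*)

text \<open>The radical divides n, since each prime factor occurs in n with multiplicity at least 1.\<close>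
lemma rad_dvd_self:
  assumes "n > 0" shows "rad n dvd n"
proof -
  have "rad n dvd (\<Prod>p\<in>prime_factors n. p ^ multiplicity p n)"
    unfolding rad_def
    by (rule prod_dvd_prod) (auto simp: prime_factors_multiplicity intro: dvd_power)
  also have "\<dots> = n" using assms by (simp add: prime_factorization_nat[symmetric])
  finally show ?thesis .
qed

lemma prime_dvd_rad:
  assumes "prime p" "p dvd n" "n > 0" shows "p dvd rad n"
  unfolding rad_def by (rule dvd_prodI) (use assms in \<open>auto simp: prime_factors_dvd\<close>)

lemma rad_eq_1_imp:
  assumes "n > 0" "rad n = 1" shows "n = 1"
proof (rule ccontr)
  assume "n \<noteq> 1"
  then obtain p where "prime p" "p dvd n" using prime_factor_nat by blast
  hence "p dvd rad n" using prime_dvd_rad assms(1) by blast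
  with \<open>prime p\<close> assms(2) show False by simp
qed

lemma dvd_div_rad_iff:
  assumes "n > 0" shows "d dvd n div rad n \<longleftrightarrow> d * rad n dvd n"
proof -
  have "rad n > 0" using assms by (simp add: rad_def prime_factors_dvd prime_gt_0_nat)
  thus ?thesis using dvd_div_iff_mult[of "rad n" n d] rad_dvd_self[OF assms] by simp
qed

lemma prime_factors_eq_if_rad_dvd:
  assumes "n > 0" "m dvd n" "rad n dvd m" shows "prime_factors m = prime_factors n"
proof -
  have "m > 0" using assms(1,2) by (auto intro: Nat.gr0I)
  have "prime p \<and> p dvd m \<longleftrightarrow> prime p \<and> p dvd n" for p
    using assms prime_dvd_rad[of p n] dvd_trans by blast
  thus ?thesis using \<open>m > 0\<close> assms(1) by (simp add: prime_factors_dvd)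
qed

lemma gcd_cofactor_coprime:
  assumes "n > 0" "d * rad n dvd n" "gcd m n = d" "m = d * k"
  shows "coprime k n"
proof (rule ccontr)
  assume "\<not> coprime k n"
  then obtain p where p: "prime p" "p dvd gcd k n"
    using prime_factor_nat coprime_iff_gcd_eq_1 by blast
  hence "p dvd k" "p dvd n" by auto
  have "d * p dvd n"
    using prime_dvd_rad[OF p(1) \<open>p dvd n\<close> assms(1)] assms(2) by (meson dvd_trans mult_dvd_mono dvd_refl)
  moreover have "d * p dvd m" using \<open>p dvd k\<close> assms(4) by simp
  ultimately have "d * p dvd d" using assms(3) by (metis gcd_greatest)
  moreover have "d > 0" using assms(1,3) by auto
  ultimately show False using p(1) by simp
qed

lemma gcd_mult_if_deep:
  assumes "n > 0"
    and "gcd a n * rad n dvd n" "gcd b n * rad n dvd n" "gcd (a * b) n * rad n dvd n"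
  shows "gcd (a * b) n = gcd a n * gcd b n"
proof -
  define d1 d2 d3 where "d1 = gcd a n" and "d2 = gcd b n" and "d3 = gcd (a * b) n"
  obtain a' where a: "a = d1 * a'" unfolding d1_def by (meson dvdE gcd_dvd1)
  obtain b' where b: "b = d2 * b'" unfolding d2_def by (meson dvdE gcd_dvd1)
  have "coprime a' n"
    using gcd_cofactor_coprime[OF assms(1) assms(2)[folded d1_def] d1_def[symmetric] a] .
  moreover have "coprime b' n"
    using gcd_cofactor_coprime[OF assms(1) assms(3)[folded d2_def] d2_def[symmetric] b] .
  ultimately have "coprime n (a' * b')" by (simp add: coprime_commute)
  hence "gcd ((a' * b') * (d1 * d2)) n = gcd (d1 * d2) n" by (rule gcd_mult_left_left_cancel)
  hence d3_eq: "gcd (d1 * d2) n = d3" unfolding d3_def a b by (simp add: ac_simps)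
  then obtain e where e: "d1 * d2 = d3 * e" by (metis dvdE gcd_dvd1)
  have "coprime e n"
    using gcd_cofactor_coprime[OF assms(1) assms(4)[folded d3_def] d3_eq e] .
  hence "coprime e (n * n)" by simp
  moreover have "d1 * d2 dvd n * n" unfolding d1_def d2_def by (intro mult_dvd_mono gcd_dvd2)
  then have "e dvd n * n" using e by (metis dvd_mult_left mult.commute)
  ultimately have "e = 1" using coprime_common_divisor[of e "n * n" e] by simp
  thus ?thesis using e unfolding d1_def d2_def d3_def by simp
qed

text \<open>A relation \<open>a * b = c (mod n)\<close> in \<open>S_D n D\<close> forces \<open>gcd a n * gcd b n = gcd c n\<close> in D.\<close>
lemma S_D_mod_product_free:
  assumes "n > 0" "\<forall>d\<in>D. d * rad n dvd n" "int_product_free D"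
  shows "mod_product_free n (S_D n D)"
  unfolding mod_product_free_def
proof (intro conjI notI)
  show "S_D n D \<subseteq> {0..<n}" unfolding S_D_def by auto
next
  assume "\<exists>a\<in>S_D n D. \<exists>b\<in>S_D n D. \<exists>c\<in>S_D n D. a * b mod n = c"
  then obtain a b c where abc: "a \<in> S_D n D" "b \<in> S_D n D" "c \<in> S_D n D" "a * b mod n = c"
    by blast
  have "gcd c n = gcd (a * b) n" using abc(4) assms(1) by auto
  hence in_D: "gcd a n \<in> D" "gcd b n \<in> D" "gcd (a * b) n \<in> D"
    using abc(1-3) unfolding S_D_def by auto
  hence "gcd (a * b) n = gcd a n * gcd b n"
    using gcd_mult_if_deep assms(1,2) by blast
  thus False using in_D assms(3) unfolding int_product_free_def by metis
qed

text \<open>Counting residues by their gcd with n; the residue 0 is excluded because \<open>n \<notin> D\<close>.\<close>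
lemma card_S_D:
  assumes "n > 0" "\<forall>d\<in>D. d dvd n" "n \<notin> D"
  shows "card (S_D n D) = (\<Sum>d\<in>D. totient (n div d))"
proof -
  have "D \<subseteq> {d. d dvd n}" using assms(2) by blast
  hence "finite D" using finite_divisors_nat[OF assms(1)] by (rule finite_subset)
  have "k \<in> S_D n D \<longleftrightarrow> k \<in> {0<..n} \<and> gcd k n \<in> D" for k
  proof -
    have "k \<noteq> 0 \<and> k \<noteq> n" if "gcd k n \<in> D" using that assms(3) by (auto intro: Nat.gr0I)
    thus ?thesis unfolding S_D_def by auto
  qed
  hence "S_D n D = (\<Union>d\<in>D. {k\<in>{0<..n}. gcd k n = d})" by blast
  also have "card \<dots> = (\<Sum>d\<in>D. card {k\<in>{0<..n}. gcd k n = d})"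
    using \<open>finite D\<close> by (intro card_UN_disjoint) auto
  also have "\<dots> = (\<Sum>d\<in>D. totient (n div d))"
    using assms(1,2) by (intro sum.cong refl card_gcd_eq_totient) auto
  finally show ?thesis .
qed

text \<open>Dividing n by a deep divisor d keeps the prime factors, so it divides the totient by d.\<close>
lemma totient_div_deep_divisor:
  assumes "n > 0" "d > 0" "d * rad n dvd n"
  shows "real (totient (n div d)) = real (totient n) / real d"
proof -
  have "d dvd n" using assms(3) by (rule dvd_mult_left)
  hence "d * rad n dvd d * (n div d)" using assms(3) by simp
  hence "rad n dvd n div d" using assms(2) by simp
  moreover have "n div d dvd n" using \<open>d dvd n\<close> assms(2) by (auto elim!: dvdE)
  ultimately have "prime_factors (n div d) = prime_factors n"
    using prime_factors_eq_if_rad_dvd assms(1) by blast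
  moreover have "real (n div d) = real n / real d" using \<open>d dvd n\<close> by (simp add: real_of_nat_div)
  ultimately show ?thesis by (simp add: totient_formula2)
qed

theorem lemma2p3:
  fixes n :: nat and D :: "nat set"
  assumes "n > 0"
    and "\<forall>d\<in>D. d > 0 \<and> d dvd (n div rad n)"
    and "int_product_free D"
  shows "mod_product_free n (S_D n D) \<and>
         real (card (S_D n D)) = real (totient n) * (\<Sum>d\<in>D. 1 / real d)"
proof -
  have deep: "\<forall>d\<in>D. d * rad n dvd n" using assms(1,2) dvd_div_rad_iff by blast
  have "1 \<notin> D" using assms(3) unfolding int_product_free_def by force
  have "n \<notin> D"
  proof
    assume "n \<in> D"
    hence "n * rad n dvd n * 1" using deep by simp
    hence "rad n = 1" using assms(1) by simp
    hence "n = 1" by (rule rad_eq_1_imp[OF assms(1)])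
    with \<open>n \<in> D\<close> \<open>1 \<notin> D\<close> show False by simp
  qed
  have "\<forall>d\<in>D. d dvd n" using deep dvd_mult_left by blast
  hence "real (card (S_D n D)) = (\<Sum>d\<in>D. real (totient (n div d)))"
    using card_S_D[OF assms(1) _ \<open>n \<notin> D\<close>] by simp
  also have "\<dots> = (\<Sum>d\<in>D. real (totient n) * (1 / real d))"
    using totient_div_deep_divisor assms(1,2) deep by (intro sum.cong refl) simp
  also have "\<dots> = real (totient n) * (\<Sum>d\<in>D. 1 / real d)" by (rule sum_distrib_left[symmetric])
  finally show ?thesis using S_D_mod_product_free[OF assms(1) deep assms(3)] by blast
qed

end
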